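(* Let $n\ge 1$, $F\in\mathbb{R}[z_1,\dots,z_n]$, and let $Y=\{(z,u)\in\mathbb{C}^{n+1}: F(z)+u=0\}$. Put $$\psi(x,t,z,u)=\Big(\langle x'-z,d_zF(z)\rangle+x_{n+1}-u\Big)^2-t^2\Big(1+\sum_{j=1}^n\big(\tfrac{\partial F}{\partial z_j}(z)\big)^2\Big),$$ for $x=(x',x_{n+1})\in\mathbb{C}^{n+1}$, $x'=(x_1,\dots,x_n)$, $t\in\mathbb{C}$, and let $$\pi:\ \Sigma:=\{(x,t,z,u)\in\mathbb{C}^{n+2}\times\mathbb{C}^{n+1}:\ (z,u)\in Y,\ \psi(x,t,z,u)=0\}\to\mathbb{C}^{n+2},\qquad (x,t,z,u)\mapsto (x,t).$$ If $x\in W_t$, then $(x,t)$ belongs to the critical value set of $\pi$.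
   Context: $\langle a,b\rangle=\sum_j a_jb_j$ and $d_zF=(\partial F/\partial z_1,\dots,\partial F/\partial z_n)$. $\psi$ is the product $\psi_+\psi_-$ of the two phase functions $\psi_\pm=(\langle x'-z,d_zF(z)\rangle+x_{n+1}-u)\pm t\,|(d_zF(z),1)|$, where $|(d_zF(z),1)|$ denotes a square root of $1+\sum_j(\partial F/\partial z_j)^2$. The wave front $W_t\subset\mathbb{C}^{n+1}$ at time $t$ with initial front $Y$ is the set of points $x=(x_1,\dots,x_{n+1})$ of the form $x_j=\pm t\,\frac{1}{|(d_zF(z),1)|}\frac{\partial F}{\partial z_j}(z)+z_j$ ($1\le j\le n$), $x_{n+1}=\pm t\,\frac{1}{|(d_zF(z),1)|}+u$, for some $(z,u)\in Y$ (same sign choice throughout). The critical value set of $\pi$ is the image under $\pi$ of the set of points of $\Sigma$ at which $\pi|_\Sigma$ fails to be a submersion (including singular points of $\Sigma$). *)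

theory Defs
  imports "HOL-Analysis.Analysis"
begin

text \<open>Points of complex affine spaces are represented as functions
  nat => complex; only finitely many coordinates are used.
  z = (z_1,...,z_n) is stored as z 0, ..., z (n-1);
  x = (x_1,...,x_(n+1)) is stored as x 0, ..., x n.
  A point (x,t,z,u) of C^(n+2) x C^(n+1) = C^(2n+3) is stored as p with
  p 0..p n = x, p (n+1) = t, p (n+2+j) = z_(j+1) for j<n, p (2n+2) = u,
  and p i = 0 for i >= 2n+3.\<close>

definition real_poly_fun :: "nat \<Rightarrow> ((nat \<Rightarrow> complex) \<Rightarrow> complex) \<Rightarrow> bool" where
  "real_poly_fun n F \<longleftrightarrow>
     (\<exists>(A :: (nat \<Rightarrow> nat) set) (c :: (nat \<Rightarrow> nat) \<Rightarrow> real). finite A \<and>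
        (\<forall>z. F z = (\<Sum>\<alpha>\<in>A. of_real (c \<alpha>) * (\<Prod>j<n. z j ^ \<alpha> j))))"

definition partial_c :: "((nat \<Rightarrow> complex) \<Rightarrow> complex) \<Rightarrow> nat \<Rightarrow> (nat \<Rightarrow> complex) \<Rightarrow> complex" where
  "partial_c G i p = deriv (\<lambda>w. G (p(i := w))) (p i)"

definition Yset :: "((nat \<Rightarrow> complex) \<Rightarrow> complex) \<Rightarrow> ((nat \<Rightarrow> complex) \<times> complex) set" where
  "Yset F = {(z, u). F z + u = 0}"

definition zc :: "nat \<Rightarrow> (nat \<Rightarrow> complex) \<Rightarrow> (nat \<Rightarrow> complex)" where
  "zc n p = (\<lambda>j. if j < n then p (n + 2 + j) else 0)"
definition uc :: "nat \<Rightarrow> (nat \<Rightarrow> complex) \<Rightarrow> complex" where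
  "uc n p = p (2 * n + 2)"
definition tc :: "nat \<Rightarrow> (nat \<Rightarrow> complex) \<Rightarrow> complex" where
  "tc n p = p (n + 1)"

definition G1 :: "nat \<Rightarrow> ((nat \<Rightarrow> complex) \<Rightarrow> complex) \<Rightarrow> (nat \<Rightarrow> complex) \<Rightarrow> complex" where
  "G1 n F p = F (zc n p) + uc n p"

definition psi :: "nat \<Rightarrow> ((nat \<Rightarrow> complex) \<Rightarrow> complex) \<Rightarrow> (nat \<Rightarrow> complex) \<Rightarrow> complex" where
  "psi n F p =
     ((\<Sum>j<n. (p j - zc n p j) * partial_c F j (zc n p)) + p n - uc n p)\<^sup>2
     - (tc n p)\<^sup>2 * (1 + (\<Sum>j<n. (partial_c F j (zc n p))\<^sup>2))"

definition Sigma_set :: "nat \<Rightarrow> ((nat \<Rightarrow> complex) \<Rightarrow> complex) \<Rightarrow> (nat \<Rightarrow> complex) set" where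
  "Sigma_set n F = {p. (\<forall>i\<ge>2*n+3. p i = 0) \<and> (zc n p, uc n p) \<in> Yset F \<and> psi n F p = 0}"

text \<open>Singular point of Sigma (Jacobian criterion for the defining equations G1, psi).\<close>
definition singular_pt :: "nat \<Rightarrow> ((nat \<Rightarrow> complex) \<Rightarrow> complex) \<Rightarrow> (nat \<Rightarrow> complex) \<Rightarrow> bool" where
  "singular_pt n F p \<longleftrightarrow>
     (\<exists>a b :: complex. (a, b) \<noteq> (0, 0) \<and>
        (\<forall>i<2*n+3. a * partial_c (G1 n F) i p + b * partial_c (psi n F) i p = 0))"

definition tangent_sp :: "nat \<Rightarrow> ((nat \<Rightarrow> complex) \<Rightarrow> complex) \<Rightarrow> (nat \<Rightarrow> complex) \<Rightarrow> (nat \<Rightarrow> complex) set" where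
  "tangent_sp n F p = {v. (\<forall>i\<ge>2*n+3. v i = 0) \<and>
      (\<Sum>i<2*n+3. partial_c (G1 n F) i p * v i) = 0 \<and>
      (\<Sum>i<2*n+3. partial_c (psi n F) i p * v i) = 0}"

definition proj_pi :: "nat \<Rightarrow> (nat \<Rightarrow> complex) \<Rightarrow> (nat \<Rightarrow> complex)" where
  "proj_pi n p = (\<lambda>i. if i < n + 2 then p i else 0)"

definition submersion_at :: "nat \<Rightarrow> ((nat \<Rightarrow> complex) \<Rightarrow> complex) \<Rightarrow> (nat \<Rightarrow> complex) \<Rightarrow> bool" where
  "submersion_at n F p \<longleftrightarrow>
     (\<forall>w :: nat \<Rightarrow> complex. \<exists>v\<in>tangent_sp n F p. \<forall>i<n+2. v i = w i)"

definition critical_values :: "nat \<Rightarrow> ((nat \<Rightarrow> complex) \<Rightarrow> complex) \<Rightarrow> (nat \<Rightarrow> complex) set" where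
  "critical_values n F =
     proj_pi n ` {p \<in> Sigma_set n F. singular_pt n F p \<or> \<not> submersion_at n F p}"

text \<open>Wave front W_t (the square root s of 1 + sum F_j^2 must be nonzero).\<close>
definition wave_front :: "nat \<Rightarrow> ((nat \<Rightarrow> complex) \<Rightarrow> complex) \<Rightarrow> complex \<Rightarrow> (nat \<Rightarrow> complex) set" where
  "wave_front n F t = {x. (\<forall>i>n. x i = 0) \<and>
     (\<exists>z u s \<sigma>. (z, u) \<in> Yset F \<and> (\<forall>j\<ge>n. z j = 0) \<and>
        s\<^sup>2 = 1 + (\<Sum>j<n. (partial_c F j z)\<^sup>2) \<and> s \<noteq> 0 \<and> \<sigma> \<in> {1, -1::complex} \<and>
        (\<forall>j<n. x j = \<sigma> * t * partial_c F j z / s + z j) \<and>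
        x n = \<sigma> * t / s + u)}"

end

theory Submission
  imports Defs
begin

text \<open>Lift a point x of W_t to p = (x, t, z, u) in \<Sigma>. There the phase
  L = <x' - z, d_zF> + x_(n+1) - u equals \<sigma> t s, where s^2 = 1 + |d_zF|^2, so \<psi>(p) = 0.
  Differentiating \<psi> = L^2 - t^2 (1 + |d_zF|^2) at p, the second derivatives of F enter as
  2 L (\<sigma> t / s) B - 2 t^2 B with B = <d_zF, d(d_zF)>, and cancel. What is left is
  d\<psi> + 2 \<sigma> t s d(F + u) = 2 \<sigma> t s (<d_zF, dx'> + dx_(n+1)) - 2 t s^2 dt,
  a covector that only sees d\<pi>. If t = 0 it vanishes and p is a singular point of \<Sigma>;
  otherwise it is nonzero and annihilates d\<pi>(T_p \<Sigma>), so \<pi> is not a submersion at p.\<close>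

inductive_set poly_fun :: "nat \<Rightarrow> ((nat \<Rightarrow> complex) \<Rightarrow> complex) set" for N where
  poly_fun_const: "(\<lambda>z. c) \<in> poly_fun N"
| poly_fun_coord: "j < N \<Longrightarrow> (\<lambda>z. z j) \<in> poly_fun N"
| poly_fun_add: "f \<in> poly_fun N \<Longrightarrow> g \<in> poly_fun N \<Longrightarrow> (\<lambda>z. f z + g z) \<in> poly_fun N"
| poly_fun_mult: "f \<in> poly_fun N \<Longrightarrow> g \<in> poly_fun N \<Longrightarrow> (\<lambda>z. f z * g z) \<in> poly_fun N"

lemma poly_fun_diff: "f \<in> poly_fun N \<Longrightarrow> g \<in> poly_fun N \<Longrightarrow> (\<lambda>z. f z - g z) \<in> poly_fun N"
  using poly_fun_add[of f N "\<lambda>z. (\<lambda>_. -1) z * g z"] poly_fun_mult poly_fun_const by fastforce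

lemma poly_fun_sum:
  "finite A \<Longrightarrow> (\<And>j. j \<in> A \<Longrightarrow> f j \<in> poly_fun N) \<Longrightarrow> (\<lambda>z. \<Sum>j\<in>A. f j z) \<in> poly_fun N"
  by (induction A rule: finite_induct) (auto intro: poly_fun.intros)

lemma poly_fun_prod:
  "finite A \<Longrightarrow> (\<And>j. j \<in> A \<Longrightarrow> f j \<in> poly_fun N) \<Longrightarrow> (\<lambda>z. \<Prod>j\<in>A. f j z) \<in> poly_fun N"
  by (induction A rule: finite_induct) (auto intro: poly_fun.intros)

lemma poly_fun_power: "f \<in> poly_fun N \<Longrightarrow> (\<lambda>z. f z ^ k) \<in> poly_fun N"
  by (induction k) (auto intro: poly_fun.intros)

lemma real_poly_fun_imp_poly_fun:
  assumes "real_poly_fun n F"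
  shows "F \<in> poly_fun n"
proof -
  obtain A c where "finite A" and F: "F = (\<lambda>z. \<Sum>\<alpha>\<in>A. of_real (c \<alpha>) * (\<Prod>j<n. z j ^ \<alpha> j))"
    using assms unfolding real_poly_fun_def by blast
  then show ?thesis
    by (auto intro!: poly_fun_sum poly_fun_mult poly_fun_const poly_fun_prod poly_fun_power poly_fun_coord)
qed

definition partially_differentiable :: "((nat \<Rightarrow> complex) \<Rightarrow> complex) \<Rightarrow> nat \<Rightarrow> bool" where
  "partially_differentiable G i \<longleftrightarrow> (\<forall>z w. (\<lambda>v. G (z(i := v))) field_differentiable at w)"

lemma partially_differentiable_has_derivative:
  assumes "partially_differentiable G i"
  shows "((\<lambda>v. G (z(i := v))) has_field_derivative partial_c G i (z(i := w))) (at w)"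
  using assms unfolding partially_differentiable_def partial_c_def
  by (simp add: DERIV_deriv_iff_field_differentiable)

lemma partial_c_eqI:
  assumes "\<And>z w. ((\<lambda>v. G (z(i := v))) has_field_derivative G' (z(i := w))) (at w)"
  shows "partial_c G i = G'"
proof
  fix p
  show "partial_c G i p = G' p"
    using DERIV_imp_deriv[OF assms, of p "p i"] by (simp add: partial_c_def)
qed

lemma partial_c_const: "partial_c (\<lambda>z. c) i = (\<lambda>z. 0)"
  by (rule partial_c_eqI) simp

lemma partial_c_coord: "partial_c (\<lambda>z. z j) i = (\<lambda>z. if i = j then 1 else 0)"
  by (rule partial_c_eqI) (auto intro!: derivative_eq_intros)

lemma partial_c_add:
  assumes "partially_differentiable f i" "partially_differentiable g i"
  shows "partial_c (\<lambda>z. f z + g z) i = (\<lambda>z. partial_c f i z + partial_c g i z)"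
  by (rule partial_c_eqI) (intro DERIV_add partially_differentiable_has_derivative assms)

lemma partial_c_mult:
  assumes "partially_differentiable f i" "partially_differentiable g i"
  shows "partial_c (\<lambda>z. f z * g z) i = (\<lambda>z. partial_c f i z * g z + f z * partial_c g i z)"
  by (rule partial_c_eqI, rule DERIV_cong[OF DERIV_mult])
    (auto intro: partially_differentiable_has_derivative assms simp: mult.commute)

lemma poly_fun_partially_differentiable: "G \<in> poly_fun N \<Longrightarrow> partially_differentiable G i"
  unfolding partially_differentiable_def
proof (induction rule: poly_fun.induct)
  case (poly_fun_coord j)
  then show ?case
    by (cases "j = i") (simp_all add: field_differentiable_ident field_differentiable_const)
qed (auto intro!: derivative_intros)

lemma poly_fun_partial_c: "G \<in> poly_fun N \<Longrightarrow> partial_c G i \<in> poly_fun N"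
proof (induction rule: poly_fun.induct)
  case (poly_fun_add f g)
  then show ?case
    by (simp add: partial_c_add poly_fun_partially_differentiable poly_fun.poly_fun_add)
next
  case (poly_fun_mult f g)
  then show ?case
    by (simp add: partial_c_mult poly_fun_partially_differentiable poly_fun.intros)
qed (simp_all add: partial_c_const partial_c_coord poly_fun.poly_fun_const)

lemma sum_mult_delta:
  fixes f :: "nat \<Rightarrow> 'a :: semiring_1"
  assumes "i < N"
  shows "(\<Sum>k<N. f k * (if k = i then 1 else 0)) = f i"
proof -
  have "(\<Sum>k<N. f k * (if k = i then 1 else 0)) = (\<Sum>k<N. if k = i then f k else 0)"
    by (rule sum.cong) auto
  with assms show ?thesis by simp
qed

definition differential :: "nat \<Rightarrow> ((nat \<Rightarrow> complex) \<Rightarrow> complex) \<Rightarrow> (nat \<Rightarrow> complex) \<Rightarrow> (nat \<Rightarrow> complex) \<Rightarrow> complex" where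
  "differential N G p v = (\<Sum>i<N. partial_c G i p * v i)"

lemma differential_unit_vector:
  "i < N \<Longrightarrow> differential N G p (\<lambda>k. if k = i then 1 else 0) = partial_c G i p"
  unfolding differential_def by (rule sum_mult_delta)

lemma poly_fun_has_directional_derivative:
  assumes "G \<in> poly_fun N"
  shows "((\<lambda>h. G (\<lambda>k. p k + h * v k)) has_field_derivative differential N G p v) (at 0)"
  using assms unfolding differential_def
proof (induction rule: poly_fun.induct)
  case (poly_fun_const c)
  then show ?case by (simp add: partial_c_const)
next
  case (poly_fun_coord j)
  then show ?case
    using sum_mult_delta[of j N v]
    by (auto simp: partial_c_coord mult.commute intro!: derivative_eq_intros)
next
  case (poly_fun_add f g)
  then show ?case
    using DERIV_add[OF poly_fun_add.IH]
    by (simp add: partial_c_add poly_fun_partially_differentiable sum.distrib distrib_right)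
next
  case (poly_fun_mult f g)
  then show ?case
    using DERIV_mult[OF poly_fun_mult.IH]
    by (simp add: partial_c_mult poly_fun_partially_differentiable sum.distrib
        sum_distrib_left sum_distrib_right algebra_simps)
qed

lemma zc_less: "j < n \<Longrightarrow> zc n p j = p (n + 2 + j)"
  by (simp add: zc_def)

lemma zc_line: "zc n (\<lambda>k. p k + h * v k) = (\<lambda>k. zc n p k + h * zc n v k)"
  by (simp add: zc_def fun_eq_iff)

lemma poly_fun_comp_zc: "G \<in> poly_fun n \<Longrightarrow> (\<lambda>p. G (zc n p)) \<in> poly_fun (2 * n + 3)"
proof (induction rule: poly_fun.induct)
  case (poly_fun_coord j)
  then have "(\<lambda>p. p (n + 2 + j)) \<in> poly_fun (2 * n + 3)"
    by (intro poly_fun.poly_fun_coord) simp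
  with poly_fun_coord show ?case by (simp add: zc_less)
qed (auto intro: poly_fun.intros)

lemma poly_fun_zc_coord: "j < n \<Longrightarrow> (\<lambda>p. zc n p j) \<in> poly_fun (2 * n + 3)"
  using poly_fun_comp_zc[OF poly_fun_coord, of j n] .

lemma psi_along_line:
  "psi n F (\<lambda>k. p k + h * v k) =
     ((\<Sum>j<n. (p j - zc n p j + h * (v j - zc n v j)) * partial_c F j (zc n (\<lambda>k. p k + h * v k)))
        + (p n - uc n p + h * (v n - uc n v)))\<^sup>2
     - (tc n p + h * tc n v)\<^sup>2 * (1 + (\<Sum>j<n. (partial_c F j (zc n (\<lambda>k. p k + h * v k)))\<^sup>2))"
  unfolding psi_def uc_def tc_def
  by (simp add: zc_line algebra_simps)

context
  fixes n :: nat and F :: "(nat \<Rightarrow> complex) \<Rightarrow> complex"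
  assumes F: "real_poly_fun n F"
begin

lemma poly_fun_G1: "G1 n F \<in> poly_fun (2 * n + 3)"
  unfolding G1_def[abs_def] uc_def
  by (intro poly_fun_add poly_fun_comp_zc real_poly_fun_imp_poly_fun F poly_fun_coord) simp

lemma poly_fun_psi: "psi n F \<in> poly_fun (2 * n + 3)"
  unfolding psi_def[abs_def] uc_def tc_def
  by (intro poly_fun_diff poly_fun_add poly_fun_mult poly_fun_power poly_fun_sum poly_fun_coord
      poly_fun_zc_coord poly_fun_const poly_fun_comp_zc poly_fun_partial_c real_poly_fun_imp_poly_fun F)
    auto

lemma differential_G1:
  "differential (2 * n + 3) (G1 n F) p v = (\<Sum>j<n. partial_c F j (zc n p) * zc n v j) + uc n v"
proof -
  have "((\<lambda>h. F (\<lambda>k. zc n p k + h * zc n v k)) has_field_derivative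
      differential n F (zc n p) (zc n v)) (at 0)"
    by (intro poly_fun_has_directional_derivative real_poly_fun_imp_poly_fun F)
  then have "((\<lambda>h. G1 n F (\<lambda>k. p k + h * v k)) has_field_derivative
      differential n F (zc n p) (zc n v) + uc n v) (at 0)"
    unfolding G1_def uc_def zc_line by (auto intro!: derivative_eq_intros)
  from DERIV_unique[OF poly_fun_has_directional_derivative[OF poly_fun_G1] this]
  show ?thesis by (simp add: differential_def)
qed

lemma partial_c_F_along_line_differentiable:
  "\<exists>d. ((\<lambda>h. partial_c F j (zc n (\<lambda>k. p k + h * v k))) has_field_derivative d) (at 0)"
  unfolding zc_line
  using poly_fun_has_directional_derivative[OF poly_fun_partial_c[OF real_poly_fun_imp_poly_fun[OF F]]]
  by blast

end

lemma front_phase_eq: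
  fixes D a :: "nat \<Rightarrow> complex"
  assumes s: "s\<^sup>2 = 1 + (\<Sum>j<n. (D j)\<^sup>2)" "s \<noteq> 0"
    and a: "\<And>j. j < n \<Longrightarrow> a j = \<sigma> * t * D j / s" and c: "c = \<sigma> * t / s"
  shows "(\<Sum>j<n. a j * D j) + c = \<sigma> * t * s"
proof -
  have "(\<Sum>j<n. a j * D j) + c = \<sigma> * t / s * (1 + (\<Sum>j<n. (D j)\<^sup>2))"
    by (simp add: a c sum_distrib_left power2_eq_square algebra_simps)
  also have "\<dots> = \<sigma> * t / s * s\<^sup>2"
    by (simp add: s(1))
  also have "\<dots> = \<sigma> * t * s"
    using s(2) by (simp add: power2_eq_square)
  finally show ?thesis .
qed

lemma squared_phase_derivative_on_front:
  fixes g :: "nat \<Rightarrow> complex \<Rightarrow> complex" and a b g' :: "nat \<Rightarrow> complex"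
  assumes g': "\<And>j. j < n \<Longrightarrow> (g j has_field_derivative g' j) (at 0)"
    and s: "s\<^sup>2 = 1 + (\<Sum>j<n. (g j 0)\<^sup>2)" "s \<noteq> 0" and \<sigma>: "\<sigma>\<^sup>2 = 1"
    and a: "\<And>j. j < n \<Longrightarrow> a j = \<sigma> * t * g j 0 / s" and c: "c = \<sigma> * t / s"
  shows "((\<lambda>h. ((\<Sum>j<n. (a j + h * b j) * g j h) + (c + h * d))\<^sup>2 - (t + h * e)\<^sup>2 * (1 + (\<Sum>j<n. (g j h)\<^sup>2)))
     has_field_derivative 2 * \<sigma> * t * s * ((\<Sum>j<n. b j * g j 0) + d) - 2 * t * e * s\<^sup>2) (at 0)"
proof -
  define B where "B = (\<Sum>j<n. g j 0 * g' j)"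
  have L: "(\<Sum>j<n. a j * g j 0) + c = \<sigma> * t * s"
    using front_phase_eq[OF s a c] .
  have M: "(\<Sum>j<n. b j * g j 0 + a j * g' j) + d = (\<Sum>j<n. b j * g j 0) + d + \<sigma> * t / s * B"
    by (simp add: a B_def sum.distrib sum_distrib_left algebra_simps)
  have dL: "((\<lambda>h. (\<Sum>j<n. (a j + h * b j) * g j h) + (c + h * d)) has_field_derivative
      (\<Sum>j<n. b j * g j 0 + a j * g' j) + d) (at 0)"
    by (rule DERIV_cong, (rule derivative_intros DERIV_sum g' | simp)+) (simp add: mult.commute)
  have dQ: "((\<lambda>h. 1 + (\<Sum>j<n. (g j h)\<^sup>2)) has_field_derivative 2 * B) (at 0)"
    unfolding B_def sum_distrib_left
    by (rule DERIV_cong, (rule derivative_intros DERIV_sum g' | simp)+) (simp add: mult.commute)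
  have raw: "((\<lambda>h. ((\<Sum>j<n. (a j + h * b j) * g j h) + (c + h * d))\<^sup>2 - (t + h * e)\<^sup>2 * (1 + (\<Sum>j<n. (g j h)\<^sup>2)))
     has_field_derivative 2 * ((\<Sum>j<n. a j * g j 0) + c) * ((\<Sum>j<n. b j * g j 0 + a j * g' j) + d)
       - 2 * t * e * (1 + (\<Sum>j<n. (g j 0)\<^sup>2)) - t\<^sup>2 * (2 * B)) (at 0)"
    by (rule DERIV_cong, (rule derivative_intros dL dQ)+) (simp add: algebra_simps)
  \<comment> \<open>The terms with g', i.e. with the second derivatives of F, cancel since \<sigma>^2 = 1.\<close>
  have \<sigma>\<sigma>: "\<sigma> * (\<sigma> * y) = y" for y
    using \<sigma> by (simp add: power2_eq_square flip: mult.assoc)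
  have "2 * (\<sigma> * t * s) * (X + d + \<sigma> * t / s * B) - 2 * t * e * s\<^sup>2 - t\<^sup>2 * (2 * B)
      = 2 * \<sigma> * t * s * (X + d) - 2 * t * e * s\<^sup>2" for X
    using s(2) by (simp add: algebra_simps power2_eq_square \<sigma>\<sigma>)
  then show ?thesis
    using raw unfolding L M s(1)[symmetric] by (rule DERIV_cong[rotated])
qed

lemma singular_or_not_submersion_if_conormal_factors:
  assumes ab: "(a, b) \<noteq> (0, 0)"
    and factors: "\<And>v. a * differential (2 * n + 3) (G1 n F) p v + b * differential (2 * n + 3) (psi n F) p v
                   = (\<Sum>i<n + 2. c i * v i)"
  shows "singular_pt n F p \<or> \<not> submersion_at n F p"
proof (cases "\<forall>i<n + 2. c i = 0")
  case True
  have "a * partial_c (G1 n F) i p + b * partial_c (psi n F) i p = 0" if "i < 2 * n + 3" for i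
  proof -
    have "(\<Sum>k<n + 2. c k * (if k = i then 1 else 0)) = 0"
      using True by (intro sum.neutral) simp
    then show ?thesis
      using factors[of "\<lambda>k. if k = i then 1 else 0"] by (simp only: differential_unit_vector that)
  qed
  with ab have "singular_pt n F p" unfolding singular_pt_def by (intro exI[of _ a] exI[of _ b]) auto
  then show ?thesis ..
next
  case False
  then obtain i where i: "i < n + 2" "c i \<noteq> 0" by auto
  have "\<not> submersion_at n F p"
  proof
    assume "submersion_at n F p"
    then obtain v where "v \<in> tangent_sp n F p" and v: "\<forall>k<n + 2. v k = (if k = i then 1 else 0)"
      unfolding submersion_at_def by (elim allE[of _ "\<lambda>k. if k = i then 1 else 0"]) auto
    then have "differential (2 * n + 3) (G1 n F) p v = 0" "differential (2 * n + 3) (psi n F) p v = 0"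
      by (simp_all add: tangent_sp_def differential_def)
    then have "(\<Sum>k<n + 2. c k * v k) = 0"
      using factors[of v] by simp
    moreover have "(\<Sum>k<n + 2. c k * v k) = c i"
      using sum_mult_delta[OF i(1), of c] v by simp
    ultimately show False using i(2) by simp
  qed
  then show ?thesis ..
qed

context
  fixes n :: nat and F :: "(nat \<Rightarrow> complex) \<Rightarrow> complex" and p :: "nat \<Rightarrow> complex" and \<sigma> s :: complex
  assumes F: "real_poly_fun n F"
    and \<sigma>: "\<sigma>\<^sup>2 = 1" and s: "s\<^sup>2 = 1 + (\<Sum>j<n. (partial_c F j (zc n p))\<^sup>2)" "s \<noteq> 0"
    and front_coord: "\<And>j. j < n \<Longrightarrow> p j - zc n p j = \<sigma> * tc n p * partial_c F j (zc n p) / s"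
    and front_last: "p n - uc n p = \<sigma> * tc n p / s"
begin

lemma psi_eq_0_on_front: "psi n F p = 0"
proof -
  have "(\<Sum>j<n. (p j - zc n p j) * partial_c F j (zc n p)) + (p n - uc n p) = \<sigma> * tc n p * s"
    using front_phase_eq[OF s front_coord front_last] .
  then have "psi n F p = (\<sigma> * tc n p * s)\<^sup>2 - (tc n p)\<^sup>2 * s\<^sup>2"
    unfolding psi_def s(1)[symmetric] by (simp add: algebra_simps)
  with \<sigma> show ?thesis by (simp add: power_mult_distrib)
qed

lemma differential_psi_on_front:
  "differential (2 * n + 3) (psi n F) p v =
     2 * \<sigma> * tc n p * s * ((\<Sum>j<n. (v j - zc n v j) * partial_c F j (zc n p)) + (v n - uc n v))
     - 2 * tc n p * tc n v * s\<^sup>2"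
proof -
  define g where "g j h = partial_c F j (zc n (\<lambda>k. p k + h * v k))" for j h
  obtain g' where g': "\<And>j. (g j has_field_derivative g' j) (at 0)"
    using choice[of "\<lambda>j d. (g j has_field_derivative d) (at 0)"]
      partial_c_F_along_line_differentiable[OF F] unfolding g_def by blast
  have g0: "g j 0 = partial_c F j (zc n p)" for j
    by (simp add: g_def)
  have "((\<lambda>h. psi n F (\<lambda>k. p k + h * v k)) has_field_derivative
      2 * \<sigma> * tc n p * s * ((\<Sum>j<n. (v j - zc n v j) * g j 0) + (v n - uc n v))
      - 2 * tc n p * tc n v * s\<^sup>2) (at 0)"
    unfolding psi_along_line g_def[symmetric]
    by (rule squared_phase_derivative_on_front[OF g'])
      (simp_all add: g0 s \<sigma> front_coord front_last)
  from DERIV_unique[OF poly_fun_has_directional_derivative[OF poly_fun_psi[OF F]] this]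
  show ?thesis by (simp add: g0)
qed

lemma critical_on_front: "singular_pt n F p \<or> \<not> submersion_at n F p"
proof -
  define k where "k = 2 * \<sigma> * tc n p * s"
  define c where "c i = (if i < n then k * partial_c F i (zc n p) else if i = n then k
    else - 2 * tc n p * s\<^sup>2)" for i
  have "k * differential (2 * n + 3) (G1 n F) p v + 1 * differential (2 * n + 3) (psi n F) p v
      = (\<Sum>i<n + 2. c i * v i)" for v
  proof -
    have "(\<Sum>i<n + 2. c i * v i) = (\<Sum>j<n. k * partial_c F j (zc n p) * v j) + k * v n - 2 * tc n p * s\<^sup>2 * v (Suc n)"
      by (simp add: c_def numeral_2_eq_2)
    then show ?thesis
      unfolding differential_G1[OF F] differential_psi_on_front k_def
      by (simp add: algebra_simps sum_subtractf sum.distrib sum_distrib_left tc_def)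
  qed
  then show ?thesis
    by (rule singular_or_not_submersion_if_conormal_factors[rotated]) simp
qed

end

lemma wave_front_lift:
  assumes "x \<in> wave_front n F t"
  obtains p \<sigma> s where
    "\<forall>i\<ge>2 * n + 3. p i = 0" "(zc n p, uc n p) \<in> Yset F"
    "proj_pi n p = (\<lambda>i. if i \<le> n then x i else if i = n + 1 then t else 0)"
    "\<sigma>\<^sup>2 = 1" "s\<^sup>2 = 1 + (\<Sum>j<n. (partial_c F j (zc n p))\<^sup>2)" "s \<noteq> 0"
    "\<And>j. j < n \<Longrightarrow> p j - zc n p j = \<sigma> * tc n p * partial_c F j (zc n p) / s"
    "p n - uc n p = \<sigma> * tc n p / s"
proof -
  obtain z u s \<sigma> where Y: "(z, u) \<in> Yset F" and z: "\<forall>j\<ge>n. z j = 0"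
    and s: "s\<^sup>2 = 1 + (\<Sum>j<n. (partial_c F j z)\<^sup>2)" "s \<noteq> 0" and \<sigma>: "\<sigma> \<in> {1, -1}"
    and x: "\<forall>j<n. x j = \<sigma> * t * partial_c F j z / s + z j" "x n = \<sigma> * t / s + u"
    using assms unfolding wave_front_def by blast
  define p where "p i = (if i \<le> n then x i else if i = n + 1 then t
      else if i < 2 * n + 2 then z (i - (n + 2)) else if i = 2 * n + 2 then u else 0)" for i
  have zc: "zc n p = z"
    using z by (auto simp: zc_def p_def fun_eq_iff)
  have pu: "uc n p = u" and pt: "tc n p = t"
    by (simp_all add: uc_def tc_def p_def)
  show ?thesis
  proof (rule that)
    show "\<forall>i\<ge>2 * n + 3. p i = 0" by (simp add: p_def)
    show "(zc n p, uc n p) \<in> Yset F" using Y by (simp add: zc pu)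
    show "proj_pi n p = (\<lambda>i. if i \<le> n then x i else if i = n + 1 then t else 0)"
      by (auto simp: proj_pi_def p_def fun_eq_iff)
    show "s\<^sup>2 = 1 + (\<Sum>j<n. (partial_c F j (zc n p))\<^sup>2)" "s \<noteq> 0" using s by (simp_all add: zc)
    show "\<sigma>\<^sup>2 = 1" using \<sigma> by auto
    show "p j - zc n p j = \<sigma> * tc n p * partial_c F j (zc n p) / s" if "j < n" for j
      using x(1) that by (simp add: zc pt p_def)
    show "p n - uc n p = \<sigma> * tc n p / s"
      using x(2) by (simp add: pu pt p_def)
  qed
qed

theorem lemma1:
  fixes n :: nat and F :: "(nat \<Rightarrow> complex) \<Rightarrow> complex" and x :: "nat \<Rightarrow> complex" and t :: complex
  assumes "n \<ge> 1"
    and "real_poly_fun n F"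
    and "x \<in> wave_front n F t"
  shows "(\<lambda>i. if i \<le> n then x i else if i = n + 1 then t else 0) \<in> critical_values n F"
proof -
  obtain p \<sigma> s where p: "\<forall>i\<ge>2 * n + 3. p i = 0" "(zc n p, uc n p) \<in> Yset F"
    and proj: "proj_pi n p = (\<lambda>i. if i \<le> n then x i else if i = n + 1 then t else 0)"
    and front: "\<sigma>\<^sup>2 = 1" "s\<^sup>2 = 1 + (\<Sum>j<n. (partial_c F j (zc n p))\<^sup>2)" "s \<noteq> 0"
      "\<And>j. j < n \<Longrightarrow> p j - zc n p j = \<sigma> * tc n p * partial_c F j (zc n p) / s"
      "p n - uc n p = \<sigma> * tc n p / s"
    using wave_front_lift[OF assms(3)] by blast
  have "p \<in> Sigma_set n F"
    using p psi_eq_0_on_front[OF assms(2) front] by (simp add: Sigma_set_def)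
  moreover have "singular_pt n F p \<or> \<not> submersion_at n F p"
    using critical_on_front[OF assms(2) front] .
  ultimately show ?thesis
    unfolding critical_values_def proj[symmetric] by (intro imageI) simp
qed

end
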